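(* Let $S$ be a real symmetric positive definite $n\times n$ matrix which is irreducible. Define \[{\operatorname{mr_{dual}}}(S)=\min\{\operatorname{rank}(\hat S)\mid S=E-\hat S,\ \hat S\ge 0,\ E\ge 0,\ E\text{ diagonal}\},\] where $\hat S,E$ range over real symmetric $n\times n$ matrices. Then ${\operatorname{mr_{dual}}}(S)=n-1$ if and only if $S\succeq_e 0$.
   Context: $M\ge0$ means positive semidefinite. A square matrix is irreducible if it cannot be brought into block-diagonal form (with at least two diagonal blocks) by a simultaneous permutation of its rows and columns. For a real square matrix $M$, $M\succeq_e 0$ means that the off-diagonal entries of $M$ are all $\ge 0$, or can be made so by changing the signs of selected rows and the corresponding columns (i.e. there is a diagonal matrix $P$ with diagonal entries $\pm1$ such that $PMP$ has all off-diagonal entries $\ge 0$). *)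

theory Defs
  imports "HOL-Analysis.Analysis"
begin

definition symmetric_mat :: "real^'n^'n \<Rightarrow> bool" where
  "symmetric_mat M \<longleftrightarrow> transpose M = M"

definition psd :: "real^'n^'n \<Rightarrow> bool" where
  "psd M \<longleftrightarrow> symmetric_mat M \<and> (\<forall>x. 0 \<le> x \<bullet> (M *v x))"

definition pos_def :: "real^'n^'n \<Rightarrow> bool" where
  "pos_def M \<longleftrightarrow> symmetric_mat M \<and> (\<forall>x. x \<noteq> 0 \<longrightarrow> 0 < x \<bullet> (M *v x))"

definition diagonal_mat :: "real^'n^'n \<Rightarrow> bool" where
  "diagonal_mat M \<longleftrightarrow> (\<forall>i j. i \<noteq> j \<longrightarrow> M $ i $ j = 0)"

text \<open>A simultaneous permutation of rows and columns brings M into block-diagonal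
  form with at least two diagonal blocks iff the index set splits into two nonempty
  parts I and its complement with all entries between them zero.\<close>
definition irreducible_mat :: "real^'n^'n \<Rightarrow> bool" where
  "irreducible_mat M \<longleftrightarrow>
     \<not> (\<exists>I. I \<noteq> {} \<and> I \<noteq> UNIV \<and>
            (\<forall>i\<in>I. \<forall>j. j \<notin> I \<longrightarrow> M $ i $ j = 0 \<and> M $ j $ i = 0))"

definition diag_mat :: "('n \<Rightarrow> real) \<Rightarrow> real^'n^'n" where
  "diag_mat d = (\<chi> i j. if i = j then d i else 0)"

definition sign_nonneg :: "real^'n^'n \<Rightarrow> bool" where
  "sign_nonneg M \<longleftrightarrow>
     (\<exists>d :: 'n \<Rightarrow> real. (\<forall>i. d i = 1 \<or> d i = -1) \<and>
        (\<forall>i j. i \<noteq> j \<longrightarrow> 0 \<le> (diag_mat d ** M ** diag_mat d) $ i $ j))"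

definition mr_dual :: "real^'n^'n \<Rightarrow> nat" where
  "mr_dual S = Min {rank Sh | Sh E. S = E - Sh \<and> psd Sh \<and> psd E \<and> diagonal_mat E}"

end

theory Submission
  imports Defs
begin

text \<open>
  If D S D has nonnegative off-diagonal entries for a signature matrix D = diag d, the signed
  Laplacian diag (\<Sum>j. d i d j S i j) - S is a feasible Sh (S = E - Sh with E diagonal, E and
  Sh positive semidefinite) with kernel vector d, so its rank is at most n - 1. Conversely, if z
  is in the kernel of a feasible Sh, so is the vector d |z| (its quadratic form is no larger),
  and irreducibility then forces every kernel vector vanishing in one coordinate to vanish; hence
  every feasible Sh has rank at least n - 1.

  If S is not sign-nonnegative, its signed graph is unbalanced, and by induction on the number of
  vertices there are vectors g i spanning at most n - 2 dimensions with g i \<bullet> g j = - S i j for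
  i \<noteq> j. If some vertex-deleted graph V - {u} is unbalanced, it stays so after adding a small
  multiple of the rank-one term s_u s_u^T; realize the perturbed graph on V - {u} and re-insert u
  along a fresh orthogonal direction. Otherwise every negative cycle passes through all vertices,
  so u has exactly two neighbours p and q: if they are not adjacent, adding s_u s_u^T turns the
  path p u q into an edge and the same step applies; if they are, V is a negative triangle, which
  has a rank-one realization. The Gram matrix Sh of g and E = Sh + S then form a feasible
  decomposition of rank at most n - 2.
\<close>

section \<open>Positive semidefinite matrices\<close>

lemma quadratic_form_eq_sum:
  fixes M :: "real^'n^'n"
  shows "x \<bullet> (M *v x) = (\<Sum>i\<in>UNIV. \<Sum>j\<in>UNIV. x$i * M$i$j * x$j)"
  by (simp add: inner_vec_def matrix_vector_mult_def sum_distrib_left mult.assoc)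

lemma symmetric_mat_nth: "symmetric_mat M \<Longrightarrow> M$j$i = M$i$j"
  unfolding symmetric_mat_def by (metis transpose_def vec_lambda_beta)

lemma pos_def_imp_psd:
  assumes "pos_def M"
  shows "psd M"
proof -
  have "0 \<le> x \<bullet> (M *v x)" for x
    using assms by (cases "x = 0") (auto simp: pos_def_def less_imp_le)
  then show ?thesis using assms by (simp add: pos_def_def psd_def)
qed

lemma psd_add:
  assumes "psd A" "psd B"
  shows "psd (A + B)"
proof -
  have "symmetric_mat (A + B)"
    using assms by (simp add: psd_def symmetric_mat_def transpose_def vec_eq_iff)
  then show ?thesis
    using assms by (simp add: psd_def matrix_vector_mult_add_rdistrib inner_add_right)
qed

lemma psd_quadratic_form_eq_0_imp:
  fixes M :: "real^'n^'n"
  assumes "psd M" "x \<bullet> (M *v x) = 0"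
  shows "M *v x = 0"
proof -
  have sym: "x \<bullet> (M *v y) = y \<bullet> (M *v x)" for y
    using assms(1) unfolding psd_def symmetric_mat_def
    by (metis dot_lmul_matrix inner_commute transpose_transpose vector_transpose_matrix)
  define y where "y = M *v x"
  define a where "a = y \<bullet> y"
  define b where "b = y \<bullet> (M *v y)"
  have "b \<ge> 0" using assms(1) by (simp add: psd_def b_def)
  text \<open>The quadratic form along the line x + t y is 2 t a + t^2 b; take t = -a/(b+1).\<close>
  have line: "(x + t *\<^sub>R y) \<bullet> (M *v (x + t *\<^sub>R y)) = 2 * t * a + t\<^sup>2 * b" for t
    using assms(2) sym[of y]
    by (simp add: matrix_vector_right_distrib matrix_vector_mult_scaleR inner_add_left
        inner_add_right a_def b_def y_def power2_eq_square algebra_simps)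
  define t where "t = - a / (b + 1)"
  have "0 \<le> 2 * t * a + t\<^sup>2 * b"
    using assms(1) line[of t] unfolding psd_def by metis
  then have "0 \<le> (2 * t * a + t\<^sup>2 * b) * (b + 1)\<^sup>2" by simp
  also have "\<dots> = 2 * a * (t * (b + 1)) * (b + 1) + b * (t * (b + 1))\<^sup>2"
    by (simp add: power2_eq_square algebra_simps)
  also have "t * (b + 1) = - a" using \<open>b \<ge> 0\<close> by (simp add: t_def)
  finally have "a\<^sup>2 * (b + 2) \<le> 0" by (simp add: power2_eq_square algebra_simps)
  then have "a = 0" using \<open>b \<ge> 0\<close>
    by (smt (verit) mult_pos_pos zero_less_power2)
  then show ?thesis by (simp add: a_def y_def)
qed

lemma rank_ge_card_minus_one:
  fixes M :: "real^'n^'n"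
  assumes "\<And>z. M *v z = 0 \<Longrightarrow> z$k = 0 \<Longrightarrow> z = 0"
  shows "CARD('n) - 1 \<le> rank M"
proof -
  define H :: "(real^'n) set" where "H = {z. axis k 1 \<bullet> z = 0}"
  have "subspace H" by (simp add: H_def subspace_hyperplane)
  have "inj_on ((*v) M) H"
  proof (rule inj_onI)
    fix x y assume "x \<in> H" "y \<in> H" "M *v x = M *v y"
    then have "M *v (x - y) = 0" "(x - y)$k = 0"
      by (simp_all add: H_def matrix_vector_mult_diff_distrib inner_axis')
    then show "x = y" using assms[of "x - y"] by simp
  qed
  then have "dim ((*v) M ` H) = dim H"
    using \<open>subspace H\<close> by (intro dim_image_eq) (simp_all add: span_eq_iff[THEN iffD2])
  also have "dim H = CARD('n) - 1"
    by (simp add: H_def dim_hyperplane)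
  finally have "CARD('n) - 1 = dim ((*v) M ` H)" by simp
  also have "\<dots> \<le> rank M"
    unfolding rank_dim_range by (rule dim_subset) auto
  finally show ?thesis .
qed

section \<open>Balanced signed graphs\<close>

lemma diag_mat_mult_mult_nth: "(diag_mat d ** M ** diag_mat d) $ i $ j = d i * M$i$j * d j"
  by (simp add: matrix_matrix_mult_def diag_mat_def if_distrib if_distribR sum.delta sum.delta'
      cong: if_cong)

definition balanced :: "('n \<Rightarrow> 'n \<Rightarrow> real) \<Rightarrow> 'n set \<Rightarrow> bool" where
  "balanced s V \<longleftrightarrow>
     (\<exists>d. (\<forall>i. d i = 1 \<or> d i = -1) \<and> (\<forall>i\<in>V. \<forall>j\<in>V. i \<noteq> j \<longrightarrow> 0 \<le> d i * d j * s i j))"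

lemma balancedI:
  assumes "\<And>i. d i = 1 \<or> d i = -1"
    and "\<And>i j. i \<in> V \<Longrightarrow> j \<in> V \<Longrightarrow> i \<noteq> j \<Longrightarrow> 0 \<le> d i * d j * s i j"
  shows "balanced s V"
  unfolding balanced_def by (rule exI[of _ d]) (use assms in auto)

lemma balancedE:
  assumes "balanced s V"
  obtains d where "\<And>i. d i = 1 \<or> d i = -1"
    and "\<And>i j. i \<in> V \<Longrightarrow> j \<in> V \<Longrightarrow> i \<noteq> j \<Longrightarrow> 0 \<le> d i * d j * s i j"
  using assms unfolding balanced_def by auto

lemma sign_nonneg_iff_balanced: "sign_nonneg M \<longleftrightarrow> balanced (\<lambda>i j. M$i$j) UNIV"
  by (simp add: sign_nonneg_def balanced_def diag_mat_mult_mult_nth ac_simps)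

lemma sign_nonnegE:
  assumes "sign_nonneg M"
  obtains d where "\<And>i. d i = 1 \<or> d i = -1" and "\<And>i j. i \<noteq> j \<Longrightarrow> 0 \<le> d i * d j * M$i$j"
  using assms unfolding sign_nonneg_iff_balanced by (rule balancedE) (rule that; simp)

section \<open>Dual decompositions of sign-nonnegative matrices\<close>

lemma sign_switch_abs_le:
  fixes p q w x y :: real
  assumes "p = 1 \<or> p = -1" "q = 1 \<or> q = -1" "0 \<le> p * q * w"
  shows "(p * \<bar>x\<bar>) * (- w) * (q * \<bar>y\<bar>) \<le> x * (- w) * y"
proof -
  have "(p * \<bar>x\<bar>) * (- w) * (q * \<bar>y\<bar>) = - (p * q * w * (\<bar>x\<bar> * \<bar>y\<bar>))"
    by (simp add: algebra_simps)
  also have "\<dots> \<le> - (p * q * w * ((p * x) * (q * y)))"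
    using assms by (simp, intro mult_left_mono) (auto simp: abs_mult[symmetric])
  also have "\<dots> = x * (- w) * y"
    using assms(1,2) by (elim disjE) simp_all
  finally show ?thesis .
qed

lemma kernel_signed_abs:
  fixes S E Sh :: "real^'n^'n"
  assumes d: "\<And>i. d i = 1 \<or> d i = -1" and dS: "\<And>i j. i \<noteq> j \<Longrightarrow> 0 \<le> d i * d j * S$i$j"
    and dec: "S = E - Sh" "diagonal_mat E" and "psd Sh" and z: "Sh *v z = 0"
  shows "Sh *v (\<chi> i. d i * \<bar>z$i\<bar>) = 0"
proof -
  text \<open>Off the diagonal Sh is - S, made sign-definite by d, so the vector d |z| has quadratic
    form at most that of z.\<close>
  define u where "u = (\<chi> i. d i * \<bar>z$i\<bar>)"
  have "u$i * Sh$i$j * u$j \<le> z$i * Sh$i$j * z$j" for i j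
  proof (cases "i = j")
    case True
    have "u$i * u$i = z$i * z$i"
      using d[of i] by (elim disjE) (simp_all add: u_def abs_mult_self_eq)
    have "u$i * Sh$i$j * u$j = (u$i * u$i) * Sh$i$j" using True by (simp add: ac_simps)
    also have "\<dots> = z$i * Sh$i$j * z$j" using True \<open>u$i * u$i = z$i * z$i\<close> by (simp add: ac_simps)
    finally show ?thesis by (rule eq_refl)
  next
    case False
    have "Sh$i$j = - S$i$j" using dec False unfolding diagonal_mat_def by auto
    with sign_switch_abs_le[OF d[of i] d[of j] dS[OF False], of "z$i" "z$j"]
    show ?thesis by (simp add: u_def)
  qed
  then have "u \<bullet> (Sh *v u) \<le> z \<bullet> (Sh *v z)"
    unfolding quadratic_form_eq_sum by (intro sum_mono)
  moreover have "0 \<le> u \<bullet> (Sh *v u)" using \<open>psd Sh\<close> by (simp add: psd_def)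
  ultimately have "u \<bullet> (Sh *v u) = 0" using z by simp
  then have "Sh *v u = 0" by (rule psd_quadratic_form_eq_0_imp[OF \<open>psd Sh\<close>])
  then show ?thesis by (simp only: u_def)
qed

lemma kernel_zero_set_closed:
  fixes S E Sh :: "real^'n^'n"
  assumes d: "\<And>i. d i = 1 \<or> d i = -1" and dS: "\<And>i j. i \<noteq> j \<Longrightarrow> 0 \<le> d i * d j * S$i$j"
    and dec: "S = E - Sh" "diagonal_mat E" and "psd Sh" and z: "Sh *v z = 0"
    and "z$i = 0" and "S$i$j \<noteq> 0"
  shows "z$j = 0"
proof -
  define u where "u = (\<chi> i. d i * \<bar>z$i\<bar>)"
  have "Sh *v u = 0" unfolding u_def by (rule kernel_signed_abs[OF d dS dec \<open>psd Sh\<close> z])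
  define f where "f l = d i * Sh$i$l * u$l" for l
  have f_eq: "f l = - (d i * d l * S$i$l) * \<bar>z$l\<bar>" for l
  proof (cases "l = i")
    case True
    then show ?thesis using \<open>z$i = 0\<close> by (simp add: f_def u_def)
  next
    case False
    then have "Sh$i$l = - S$i$l" using dec by (simp add: diagonal_mat_def)
    then show ?thesis by (simp add: f_def u_def algebra_simps)
  qed
  have f_nonpos: "f l \<le> 0" for l
    using dS[of i l] \<open>z$i = 0\<close> by (cases "l = i") (simp_all add: f_eq)
  have "sum f UNIV = d i * (Sh *v u)$i"
    by (simp add: f_def matrix_vector_mult_def sum_distrib_left mult.assoc)
  then have "(\<Sum>l\<in>UNIV. - f l) = 0" using \<open>Sh *v u = 0\<close> by (simp add: sum_negf)
  then have "- f j = 0" using f_nonpos by (subst (asm) sum_nonneg_eq_0_iff) auto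
  moreover have "d i * d j * S$i$j \<noteq> 0" using d[of i] d[of j] \<open>S$i$j \<noteq> 0\<close> by auto
  ultimately show ?thesis by (simp add: f_eq)
qed

lemma irreducible_mat_closed_set_eq_UNIV:
  assumes "irreducible_mat M" "symmetric_mat M" "k \<in> Z"
    and closed: "\<And>i j. i \<in> Z \<Longrightarrow> M$i$j \<noteq> 0 \<Longrightarrow> j \<in> Z"
  shows "Z = UNIV"
proof (rule ccontr)
  assume "Z \<noteq> UNIV"
  then obtain i j where "i \<in> Z" "j \<notin> Z" "M$i$j \<noteq> 0 \<or> M$j$i \<noteq> 0"
    using assms(1,3) unfolding irreducible_mat_def by blast
  then show False using closed symmetric_mat_nth[OF assms(2)] by metis
qed

lemma dual_rank_lower_bound:
  fixes S E Sh :: "real^'n^'n"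
  assumes "irreducible_mat S" "symmetric_mat S" "sign_nonneg S"
    and dec: "S = E - Sh" "diagonal_mat E" "psd Sh"
  shows "CARD('n) - 1 \<le> rank Sh"
proof -
  obtain d where d: "\<And>i. d i = 1 \<or> d i = -1" and dS: "\<And>i j. i \<noteq> j \<Longrightarrow> 0 \<le> d i * d j * S$i$j"
    using sign_nonnegE[OF assms(3)] by blast
  obtain k :: 'n where True by blast
  show ?thesis
  proof (rule rank_ge_card_minus_one[of Sh k])
    fix z assume "Sh *v z = 0" "z$k = 0"
    have "{i. z$i = 0} = UNIV"
    proof (rule irreducible_mat_closed_set_eq_UNIV[OF assms(1,2)])
      show "k \<in> {i. z$i = 0}" using \<open>z$k = 0\<close> by simp
      show "j \<in> {i. z$i = 0}" if "i \<in> {i. z$i = 0}" "S$i$j \<noteq> 0" for i j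
        using kernel_zero_set_closed[OF d dS dec \<open>Sh *v z = 0\<close>] that by simp
    qed
    then show "z = 0" by (simp add: vec_eq_iff set_eq_iff)
  qed
qed

lemma diag_mat_mult_vec: "diag_mat c *v x = (\<chi> i. c i * x$i)"
  by (simp add: diag_mat_def matrix_vector_mult_def vec_eq_iff if_distrib if_distribR cong: if_cong)

definition signed_laplacian :: "('n \<Rightarrow> real) \<Rightarrow> real^'n^'n \<Rightarrow> real^'n^'n" where
  "signed_laplacian d M = diag_mat (\<lambda>i. \<Sum>j\<in>UNIV. d i * d j * M$i$j) - M"

lemma signed_laplacian_quadratic_form:
  assumes sym: "symmetric_mat M" and d: "\<And>i. d i = 1 \<or> d i = -1"
  shows "2 * (x \<bullet> (signed_laplacian d M *v x))
    = (\<Sum>i\<in>UNIV. \<Sum>j\<in>UNIV. d i * d j * M$i$j * (d i * x$i - d j * x$j)\<^sup>2)"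
proof -
  define W where "W i j = d i * d j * M$i$j" for i j
  have summand: "W i j * (d i * x$i - d j * x$j)\<^sup>2
      = W i j * (x$i)\<^sup>2 + W j i * (x$j)\<^sup>2 - 2 * (x$i * M$i$j * x$j)" for i j
    using d[of i] d[of j] symmetric_mat_nth[OF sym, of i j]
    by (elim disjE) (simp_all add: W_def power2_eq_square algebra_simps)
  have "x \<bullet> (signed_laplacian d M *v x)
      = (\<Sum>i\<in>UNIV. \<Sum>j\<in>UNIV. W i j * (x$i)\<^sup>2) - (\<Sum>i\<in>UNIV. \<Sum>j\<in>UNIV. x$i * M$i$j * x$j)"
    unfolding signed_laplacian_def matrix_vector_mult_diff_rdistrib inner_diff_right
      diag_mat_mult_vec quadratic_form_eq_sum
    by (simp add: inner_vec_def W_def sum_distrib_left sum_distrib_right power2_eq_square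
        mult.commute mult.left_commute)
  moreover have "(\<Sum>i\<in>UNIV. \<Sum>j\<in>UNIV. W j i * (x$j)\<^sup>2) = (\<Sum>i\<in>UNIV. \<Sum>j\<in>UNIV. W i j * (x$i)\<^sup>2)"
    by (rule sum.swap)
  ultimately show ?thesis
    by (simp add: W_def[symmetric] summand sum.distrib sum_subtractf sum_distrib_left)
qed

lemma signed_laplacian_psd:
  assumes "symmetric_mat M" "\<And>i. d i = 1 \<or> d i = -1" "\<And>i j. i \<noteq> j \<Longrightarrow> 0 \<le> d i * d j * M$i$j"
  shows "psd (signed_laplacian d M)"
proof -
  have "symmetric_mat (signed_laplacian d M)"
    using symmetric_mat_nth[OF assms(1)]
    by (simp add: signed_laplacian_def symmetric_mat_def diag_mat_def transpose_def vec_eq_iff)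
  moreover have "0 \<le> x \<bullet> (signed_laplacian d M *v x)" for x
  proof -
    have "0 \<le> d i * d j * M$i$j * (d i * x$i - d j * x$j)\<^sup>2" for i j
      using assms(3)[of i j] by (cases "i = j") simp_all
    then have "0 \<le> 2 * (x \<bullet> (signed_laplacian d M *v x))"
      unfolding signed_laplacian_quadratic_form[OF assms(1,2)] by (intro sum_nonneg)
    then show ?thesis by simp
  qed
  ultimately show ?thesis by (simp add: psd_def)
qed

lemma signed_laplacian_kernel:
  assumes "\<And>i. d i = 1 \<or> d i = -1"
  shows "signed_laplacian d M *v (\<chi> i. d i) = 0"
proof -
  have "(\<Sum>j\<in>UNIV. d i * d j * M$i$j) * d i = (\<Sum>j\<in>UNIV. M$i$j * d j)" for i
    unfolding sum_distrib_right using assms[of i] by (intro sum.cong) auto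
  then show ?thesis
    unfolding signed_laplacian_def matrix_vector_mult_diff_rdistrib diag_mat_mult_vec
    by (simp add: matrix_vector_mult_def vec_eq_iff)
qed

lemma sign_nonneg_dual_decomposition:
  fixes S :: "real^'n^'n"
  assumes "psd S" "sign_nonneg S"
  obtains Sh E where "S = E - Sh" "psd Sh" "psd E" "diagonal_mat E" "rank Sh < CARD('n)"
proof -
  obtain d where d: "\<And>i. d i = 1 \<or> d i = -1" and dS: "\<And>i j. i \<noteq> j \<Longrightarrow> 0 \<le> d i * d j * S$i$j"
    using sign_nonnegE[OF assms(2)] by blast
  define Sh where "Sh = signed_laplacian d S"
  have "psd Sh"
    unfolding Sh_def using assms(1) d dS by (intro signed_laplacian_psd) (simp_all add: psd_def)
  moreover have "psd (Sh + S)" using \<open>psd Sh\<close> assms(1) by (rule psd_add)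
  moreover have "diagonal_mat (Sh + S)"
    by (simp add: Sh_def signed_laplacian_def diagonal_mat_def diag_mat_def)
  moreover have "rank Sh < CARD('n)"
  proof -
    have "(\<chi> i. d i) \<noteq> (0::real^'n)"
      using d[of undefined] by (auto simp: vec_eq_iff intro!: exI[of _ undefined])
    then have "\<exists>x. x \<noteq> 0 \<and> Sh *v x = 0"
      unfolding Sh_def by (intro exI[of _ "\<chi> i. d i"]) (simp add: signed_laplacian_kernel[OF d])
    then have "rank Sh \<noteq> CARD('n)" by (simp add: matrix_nonfull_linear_equations_eq)
    then show ?thesis using rank_bound[of Sh] by simp
  qed
  ultimately show ?thesis by (intro that[of "Sh + S" Sh]) simp_all
qed

section \<open>Walks and cycles in signed graphs\<close>

lemma pm_one_mult_cancel:
  fixes x y z :: real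
  assumes "x = 1 \<or> x = -1" "y = 1 \<or> y = -1" "z = 1 \<or> z = -1"
  shows "(x * y * a) * (x * z * b) * (y * z * c) = a * b * c"
  using assms by (elim disjE) simp_all

fun walk_weight :: "('n \<Rightarrow> 'n \<Rightarrow> real) \<Rightarrow> 'n list \<Rightarrow> real" where
  "walk_weight s (x # y # ys) = s x y * walk_weight s (y # ys)"
| "walk_weight s _ = 1"

definition is_walk :: "('n \<Rightarrow> 'n \<Rightarrow> real) \<Rightarrow> 'n set \<Rightarrow> 'n list \<Rightarrow> bool" where
  "is_walk s W xs \<longleftrightarrow> xs \<noteq> [] \<and> set xs \<subseteq> W \<and> successively (\<lambda>x y. x \<noteq> y \<and> s x y \<noteq> 0) xs"

lemma is_walk_snoc:
  "is_walk s W xs \<Longrightarrow> y \<in> W \<Longrightarrow> last xs \<noteq> y \<Longrightarrow> s (last xs) y \<noteq> 0 \<Longrightarrow> is_walk s W (xs @ [y])"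
  by (auto simp: is_walk_def successively_append_iff)

lemma is_walk_split:
  assumes "is_walk s W (as @ z # bs)"
  shows "is_walk s W (z # bs)" and "is_walk s W (as @ [z])"
  using assms by (auto simp: is_walk_def successively_append_iff)

lemma balanced_walk_weight_pos:
  assumes d: "\<And>i. d i = 1 \<or> d i = -1"
    and db: "\<And>i j. i \<in> W \<Longrightarrow> j \<in> W \<Longrightarrow> i \<noteq> j \<Longrightarrow> 0 \<le> d i * d j * s i j"
  shows "is_walk s W xs \<Longrightarrow> 0 < d (hd xs) * d (last xs) * walk_weight s xs"
proof (induction xs rule: induct_list012)
  case 1
  then show ?case by (simp add: is_walk_def)
next
  case (2 x)
  then show ?case using d[of x] by auto
next
  case (3 x y zs)
  have "is_walk s W (y # zs)" using "3.prems" by (auto simp: is_walk_def)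
  then have IH: "0 < d y * d (last (y # zs)) * walk_weight s (y # zs)" using "3.IH"(2) by simp
  have "x \<noteq> y" "s x y \<noteq> 0" "x \<in> W" "y \<in> W" using "3.prems" by (auto simp: is_walk_def)
  then have "0 < d x * d y * s x y"
    using db[of x y] d[of x] d[of y] by (auto simp: order_le_less)
  have "0 < (d x * d y * s x y) * (d y * d (last (y # zs)) * walk_weight s (y # zs))"
    using \<open>0 < d x * d y * s x y\<close> IH by simp
  also have "\<dots> = (d y * d y) * (d x * d (last (y # zs)) * (s x y * walk_weight s (y # zs)))"
    by (simp only: mult.assoc mult.commute mult.left_commute)
  finally show ?case using d[of y] by auto
qed

lemma balanced_cycle_weight_nonneg:
  assumes d: "\<And>i. d i = 1 \<or> d i = -1"
    and db: "\<And>i j. i \<in> W \<Longrightarrow> j \<in> W \<Longrightarrow> i \<noteq> j \<Longrightarrow> 0 \<le> d i * d j * s i j"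
    and "u \<in> W" "is_walk s W xs" "u \<notin> set xs"
  shows "0 \<le> s u (hd xs) * s u (last xs) * walk_weight s xs"
proof -
  have "hd xs \<in> set xs" "last xs \<in> set xs" using \<open>is_walk s W xs\<close> by (auto simp: is_walk_def)
  then have "hd xs \<in> W - {u}" "last xs \<in> W - {u}" using assms(4,5) by (auto simp: is_walk_def)
  then have "0 \<le> d u * d (hd xs) * s u (hd xs)" "0 \<le> d u * d (last xs) * s u (last xs)"
    using db \<open>u \<in> W\<close> by auto
  moreover have "0 < d (hd xs) * d (last xs) * walk_weight s xs"
    using balanced_walk_weight_pos[OF d db \<open>is_walk s W xs\<close>] .
  ultimately have "0 \<le> (d u * d (hd xs) * s u (hd xs)) * (d u * d (last xs) * s u (last xs))
      * (d (hd xs) * d (last xs) * walk_weight s xs)"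
    by (metis mult_nonneg_nonneg less_imp_le)
  then show ?thesis by (simp only: pm_one_mult_cancel[OF d d d])
qed

lemma unbalanced_imp_sign_changing_walk:
  assumes sym: "\<And>i j. s i j = s j i" and d: "\<And>i. d i = 1 \<or> d i = -1"
    and db: "\<And>i j. i \<in> V - {u} \<Longrightarrow> j \<in> V - {u} \<Longrightarrow> i \<noteq> j \<Longrightarrow> 0 \<le> d i * d j * s i j"
    and "\<not> balanced s V"
  shows "\<exists>xs. is_walk s (V - {u}) xs \<and> 0 < d (hd xs) * s (hd xs) u \<and> d (last xs) * s (last xs) u < 0"
proof (rule ccontr)
  assume no_walk: "\<not> ?thesis"
  text \<open>Flipping the signs of all vertices reachable from a positive neighbour of u, and
    giving u the sign -1, balances s on V.\<close>
  define R where "R = {last xs | xs. is_walk s (V - {u}) xs \<and> 0 < d (hd xs) * s (hd xs) u}"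
  have R_closed: "j \<in> R" if "i \<in> R" "j \<in> V - {u}" "i \<noteq> j" "s i j \<noteq> 0" for i j
  proof -
    obtain xs where xs: "is_walk s (V - {u}) xs" "0 < d (hd xs) * s (hd xs) u" "last xs = i"
      using \<open>i \<in> R\<close> by (auto simp: R_def)
    then have "is_walk s (V - {u}) (xs @ [j])" using that by (intro is_walk_snoc) auto
    moreover have "hd (xs @ [j]) = hd xs" using xs(1) by (simp add: is_walk_def)
    ultimately show ?thesis using xs(2) unfolding R_def by (metis (mono_tags, lifting) last_snoc mem_Collect_eq)
  qed
  have R_pos: "j \<in> R" if "j \<in> V - {u}" "0 < d j * s j u" for j
    using that unfolding R_def by (intro CollectI exI[of _ "[j]"]) (simp add: is_walk_def)
  have R_neg: "0 \<le> d j * s j u" if "j \<in> R" for j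
    using no_walk that by (auto simp: R_def not_less)
  define d' where "d' x = (if x = u then -1 else if x \<in> R then - d x else d x)" for x
  have "balanced s V"
  proof (rule balancedI)
    show "d' i = 1 \<or> d' i = -1" for i using d[of i] by (auto simp: d'_def)
    have u_edge: "0 \<le> d' u * d' j * s u j" if "j \<in> V - {u}" for j
    proof (cases "j \<in> R")
      case True
      then show ?thesis using R_neg[OF True] that sym[of u j] by (simp add: d'_def)
    next
      case False
      then have "d j * s j u \<le> 0" using R_pos[OF that] by (meson not_less)
      then show ?thesis using False that sym[of u j] by (simp add: d'_def)
    qed
    show "0 \<le> d' i * d' j * s i j" if "i \<in> V" "j \<in> V" "i \<noteq> j" for i j
    proof (cases "i = u \<or> j = u")
      case True
      then show ?thesis using u_edge[of i] u_edge[of j] that sym[of i j] by (auto simp: ac_simps)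
    next
      case False
      then have ij: "i \<in> V - {u}" "j \<in> V - {u}" using that by auto
      show ?thesis
      proof (cases "s i j = 0")
        case False
        then have "i \<in> R \<longleftrightarrow> j \<in> R"
          using R_closed[OF _ ij(2) \<open>i \<noteq> j\<close>] R_closed[OF _ ij(1)] \<open>i \<noteq> j\<close> sym[of i j] by auto
        then have "d' i * d' j = d i * d j" using ij by (auto simp: d'_def)
        then show ?thesis using db[OF ij \<open>i \<noteq> j\<close>] by simp
      qed simp
    qed
  qed
  then show False using \<open>\<not> balanced s V\<close> by simp
qed

lemma shortest_walk_endpoints:
  assumes "is_walk s W xs" "hd xs \<in> A" "last xs \<in> B" "z \<in> set xs"
    and shortest: "\<And>ys. is_walk s W ys \<Longrightarrow> hd ys \<in> A \<Longrightarrow> last ys \<in> B \<Longrightarrow> length xs \<le> length ys"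
  shows "z \<in> A \<Longrightarrow> z = hd xs" and "z \<in> B \<Longrightarrow> z = last xs"
proof -
  obtain as bs where xs: "xs = as @ z # bs" using split_list[OF \<open>z \<in> set xs\<close>] by blast
  show "z = hd xs" if "z \<in> A"
  proof -
    have "length xs \<le> length (z # bs)"
      using is_walk_split(1)[of s W as z bs] assms(1,3) xs that by (intro shortest) auto
    then show ?thesis using xs by simp
  qed
  show "z = last xs" if "z \<in> B"
  proof -
    have "hd (as @ [z]) = hd xs" using xs by (cases as) auto
    then have "length xs \<le> length (as @ [z])"
      using is_walk_split(2)[of s W as z bs] assms(1,2) xs that by (intro shortest) auto
    then show ?thesis using xs by simp
  qed
qed

lemma sign_changing_walk_weight_neg:
  assumes d: "\<And>i. d i = 1 \<or> d i = -1"
    and db: "\<And>i j. i \<in> W \<Longrightarrow> j \<in> W \<Longrightarrow> i \<noteq> j \<Longrightarrow> 0 \<le> d i * d j * s i j"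
    and "is_walk s W xs" "0 < d (hd xs) * s u (hd xs)" "d (last xs) * s u (last xs) < 0"
  shows "s u (hd xs) * s u (last xs) * walk_weight s xs < 0"
proof -
  have "0 < d (hd xs) * d (last xs) * walk_weight s xs"
    by (rule balanced_walk_weight_pos[OF d db \<open>is_walk s W xs\<close>])
  with assms(4,5) have "(1 * d (hd xs) * s u (hd xs)) * (1 * d (last xs) * s u (last xs))
      * (d (hd xs) * d (last xs) * walk_weight s xs) < 0"
    by (simp add: mult_neg_pos mult_pos_neg)
  moreover have "(1 * d (hd xs) * s u (hd xs)) * (1 * d (last xs) * s u (last xs))
      * (d (hd xs) * d (last xs) * walk_weight s xs) = s u (hd xs) * s u (last xs) * walk_weight s xs"
    using d[of "hd xs"] d[of "last xs"] by (intro pm_one_mult_cancel) simp_all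
  ultimately show ?thesis by (simp only:)
qed

lemma critical_negative_cycle_covers:
  assumes critical: "\<And>w. w \<in> V \<Longrightarrow> balanced s (V - {w})"
    and "u \<in> V" "is_walk s (V - {u}) xs" and neg: "s u (hd xs) * s u (last xs) * walk_weight s xs < 0"
  shows "V = insert u (set xs)"
proof -
  have "w \<in> insert u (set xs)" if "w \<in> V" for w
  proof (rule ccontr)
    assume w: "w \<notin> insert u (set xs)"
    obtain e where e: "\<And>i. e i = 1 \<or> e i = -1"
      and eb: "\<And>i j. i \<in> V - {w} \<Longrightarrow> j \<in> V - {w} \<Longrightarrow> i \<noteq> j \<Longrightarrow> 0 \<le> e i * e j * s i j"
      using balancedE[OF critical[OF \<open>w \<in> V\<close>]] by blast
    have "is_walk s (V - {w}) xs" "u \<notin> set xs" using assms(3) w by (auto simp: is_walk_def)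
    then have "0 \<le> s u (hd xs) * s u (last xs) * walk_weight s xs"
      using w \<open>u \<in> V\<close> by (intro balanced_cycle_weight_nonneg[OF e eb]) auto
    with neg show False by simp
  qed
  moreover have "insert u (set xs) \<subseteq> V" using assms(2,3) by (auto simp: is_walk_def)
  ultimately show ?thesis by blast
qed

lemma critically_unbalanced_vertex:
  assumes sym: "\<And>i j. s i j = s j i" and "\<not> balanced s V"
    and critical: "\<And>w. w \<in> V \<Longrightarrow> balanced s (V - {w})" and "u \<in> V"
  obtains p q where "p \<in> V - {u}" "q \<in> V - {u}" "p \<noteq> q" "s p u \<noteq> 0" "s q u \<noteq> 0"
    and "\<And>x. x \<in> V - {u} \<Longrightarrow> x \<noteq> p \<Longrightarrow> x \<noteq> q \<Longrightarrow> s x u = 0"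
    and "s p q = 0 \<or> (V = {u, p, q} \<and> s u p * s u q * s p q < 0)"
proof -
  text \<open>A shortest walk from a positive to a negative neighbour of u closes a negative cycle
    through u, which must be all of V.\<close>
  obtain d where d: "\<And>i. d i = 1 \<or> d i = -1"
    and db: "\<And>i j. i \<in> V - {u} \<Longrightarrow> j \<in> V - {u} \<Longrightarrow> i \<noteq> j \<Longrightarrow> 0 \<le> d i * d j * s i j"
    using balancedE[OF critical[OF \<open>u \<in> V\<close>]] by blast
  define A where "A = {x. 0 < d x * s x u}"
  define B where "B = {x. d x * s x u < 0}"
  define P where "P xs \<longleftrightarrow> is_walk s (V - {u}) xs \<and> hd xs \<in> A \<and> last xs \<in> B" for xs
  obtain xs0 where "P xs0"
    using unbalanced_imp_sign_changing_walk[OF sym d db \<open>\<not> balanced s V\<close>] by (auto simp: P_def A_def B_def)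
  then obtain xs where "P xs" and shortest: "\<And>ys. P ys \<Longrightarrow> length xs \<le> length ys"
    using ex_has_least_nat[of P xs0 length] by blast
  define p q where "p = hd xs" and "q = last xs"
  have walk: "is_walk s (V - {u}) xs" and "p \<in> A" "q \<in> B"
    using \<open>P xs\<close> by (simp_all add: P_def p_def q_def)
  have "p \<in> set xs" "q \<in> set xs" using walk by (simp_all add: is_walk_def p_def q_def)
  then have "p \<in> V - {u}" "q \<in> V - {u}" using walk by (auto simp: is_walk_def)
  have "p \<noteq> q" "s p u \<noteq> 0" "s q u \<noteq> 0" using \<open>p \<in> A\<close> \<open>q \<in> B\<close> by (auto simp: A_def B_def)
  have neg: "s u p * s u q * walk_weight s xs < 0"
    using \<open>p \<in> A\<close> \<open>q \<in> B\<close> sym[of p u] sym[of q u] unfolding p_def q_def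
    by (intro sign_changing_walk_weight_neg[OF d db walk]) (simp_all add: A_def B_def)
  have cover: "V = insert u (set xs)"
    by (rule critical_negative_cycle_covers[OF critical \<open>u \<in> V\<close> walk neg[unfolded p_def q_def]])
  have others: "s x u = 0" if "x \<in> V - {u}" "x \<noteq> p" "x \<noteq> q" for x
  proof (rule ccontr)
    assume "s x u \<noteq> 0"
    then have "x \<in> A \<or> x \<in> B" using d[of x] by (auto simp: A_def B_def)
    moreover have "x \<in> set xs" using cover that by auto
    ultimately show False
      using shortest_walk_endpoints[OF walk \<open>p \<in> A\<close>[unfolded p_def] \<open>q \<in> B\<close>[unfolded q_def]]
        shortest that
      by (auto simp: P_def p_def q_def)
  qed
  have "s p q = 0 \<or> (V = {u, p, q} \<and> s u p * s u q * s p q < 0)"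
  proof (cases "s p q = 0")
    case False
    then have "P [p, q]"
      using \<open>p \<in> A\<close> \<open>q \<in> B\<close> \<open>p \<in> V - {u}\<close> \<open>q \<in> V - {u}\<close> \<open>p \<noteq> q\<close> by (simp add: P_def is_walk_def)
    then have "length xs \<le> 2" using shortest by fastforce
    then have "xs = [p, q]"
      using walk \<open>p \<noteq> q\<close> unfolding p_def q_def is_walk_def
      by (cases xs) (auto simp: le_Suc_eq length_Suc_conv)
    then show ?thesis using cover neg by auto
  qed simp
  with \<open>p \<in> V - {u}\<close> \<open>q \<in> V - {u}\<close> \<open>p \<noteq> q\<close> \<open>s p u \<noteq> 0\<close> \<open>s q u \<noteq> 0\<close> others
  show ?thesis by (rule that)
qed

section \<open>Gram realizations of unbalanced signed graphs\<close>

lemma unbalanced_perturb: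
  assumes "finite V" "\<not> balanced s V"
  shows "\<exists>t>0. \<not> balanced (\<lambda>i j. s i j + t * r i j) V"
proof -
  have "\<forall>\<^sub>F t in at_right 0. s i j \<noteq> 0 \<longrightarrow> 0 < (s i j + t * r i j) * s i j" for i j
  proof (cases "s i j = 0")
    case False
    have "((\<lambda>t. (s i j + t * r i j) * s i j) \<longlongrightarrow> (s i j + 0 * r i j) * s i j) (at_right 0)"
      by (intro tendsto_intros)
    moreover have "0 < (s i j + 0 * r i j) * s i j"
      using False by (auto simp: zero_less_mult_iff linorder_neq_iff)
    ultimately show ?thesis by (rule order_tendstoD(1)[THEN eventually_mono]) simp
  qed simp
  then have "\<forall>\<^sub>F t in at_right 0. \<forall>i\<in>V. \<forall>j\<in>V. s i j \<noteq> 0 \<longrightarrow> 0 < (s i j + t * r i j) * s i j"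
    using \<open>finite V\<close> by (simp add: eventually_ball_finite_distrib)
  with eventually_at_right_less[of 0]
  have "\<forall>\<^sub>F t in at_right 0. 0 < t \<and> (\<forall>i\<in>V. \<forall>j\<in>V. s i j \<noteq> 0 \<longrightarrow> 0 < (s i j + t * r i j) * s i j)"
    by (rule eventually_conj)
  then obtain t where "0 < t"
    and same_sign: "\<forall>i\<in>V. \<forall>j\<in>V. s i j \<noteq> 0 \<longrightarrow> 0 < (s i j + t * r i j) * s i j"
    using eventually_happens'[OF trivial_limit_at_right_real] by blast
  have "\<not> balanced (\<lambda>i j. s i j + t * r i j) V"
  proof
    assume "balanced (\<lambda>i j. s i j + t * r i j) V"
    then obtain d where d: "\<And>i. d i = 1 \<or> d i = -1"
      and db: "\<And>i j. i \<in> V \<Longrightarrow> j \<in> V \<Longrightarrow> i \<noteq> j \<Longrightarrow> 0 \<le> d i * d j * (s i j + t * r i j)"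
      using balancedE by blast
    have sign_transfer: "0 \<le> k * b" if "k = 1 \<or> k = -1" "0 \<le> k * a" "0 < a * b" for k a b :: real
      using that by (auto simp: zero_less_mult_iff)
    have "0 \<le> d i * d j * s i j" if "i \<in> V" "j \<in> V" "i \<noteq> j" for i j
    proof (cases "s i j = 0")
      case False
      have "d i * d j = 1 \<or> d i * d j = -1" using d[of i] d[of j] by auto
      moreover have "0 \<le> d i * d j * (s i j + t * r i j)" using db[OF that] .
      moreover have "0 < (s i j + t * r i j) * s i j" using same_sign that False by blast
      ultimately show ?thesis by (rule sign_transfer)
    qed simp
    then have "balanced s V" using d by (intro balancedI)
    then show False using \<open>\<not> balanced s V\<close> by simp
  qed
  then show ?thesis using \<open>0 < t\<close> by blast
qed

lemma unbalanced_eliminate_degree_two_vertex: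
  assumes sym: "\<And>i j. s i j = s j i" and "\<not> balanced s V" and "0 < t"
    and "p \<in> V - {u}" "q \<in> V - {u}" "p \<noteq> q" "s p u \<noteq> 0" "s q u \<noteq> 0" "s p q = 0"
    and others: "\<And>x. x \<in> V - {u} \<Longrightarrow> x \<noteq> p \<Longrightarrow> x \<noteq> q \<Longrightarrow> s x u = 0"
  shows "\<not> balanced (\<lambda>i j. s i j + t * (s i u * s j u)) (V - {u})"
proof
  assume "balanced (\<lambda>i j. s i j + t * (s i u * s j u)) (V - {u})"
  then obtain d where d: "\<And>i. d i = 1 \<or> d i = -1"
    and db: "\<And>i j. i \<in> V - {u} \<Longrightarrow> j \<in> V - {u} \<Longrightarrow> i \<noteq> j \<Longrightarrow>
      0 \<le> d i * d j * (s i j + t * (s i u * s j u))"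
    using balancedE by blast
  text \<open>Off the pair p, q the perturbation vanishes, and on it s does; the sign of u is then
    forced by the edge from u to p.\<close>
  have d_rest: "0 \<le> d i * d j * s i j" if "i \<in> V - {u}" "j \<in> V - {u}" "i \<noteq> j" for i j
  proof (cases "{i, j} = {p, q}")
    case True
    then show ?thesis using \<open>s p q = 0\<close> sym[of p q] by (auto simp: doubleton_eq_iff)
  next
    case False
    then have "s i u = 0 \<or> s j u = 0" using others that by (metis insert_commute)
    then show ?thesis using db[OF that] by auto
  qed
  have "0 \<le> t * ((d p * s p u) * (d q * s q u))"
    using db[OF \<open>p \<in> V - {u}\<close> \<open>q \<in> V - {u}\<close> \<open>p \<noteq> q\<close>] \<open>s p q = 0\<close> by (simp add: algebra_simps)
  then have pq_same_sign: "0 \<le> (d p * s p u) * (d q * s q u)"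
    using \<open>0 < t\<close> by (simp add: zero_le_mult_iff)
  define e where "e = d(u := (if 0 \<le> d p * s p u then 1 else -1))"
  have "d p * s p u \<noteq> 0" using d[of p] \<open>s p u \<noteq> 0\<close> by auto
  have same_sign: "(0 < a \<longrightarrow> 0 \<le> b) \<and> (a < 0 \<longrightarrow> b \<le> 0)" if "0 \<le> a * b" for a b :: real
    using that by (auto simp: zero_le_mult_iff)
  have "0 \<le> e u * (d p * s p u) \<and> 0 \<le> e u * (d q * s q u)"
    using same_sign[OF pq_same_sign] \<open>d p * s p u \<noteq> 0\<close> by (auto simp: e_def)
  then have u_edge: "0 \<le> e u * e x * s x u" if "x \<in> V - {u}" for x
    using others[OF that] that by (cases "x = p \<or> x = q") (auto simp: e_def)
  have "balanced s V"
  proof (rule balancedI)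
    show "e i = 1 \<or> e i = -1" for i using d[of i] by (auto simp: e_def)
    show "0 \<le> e i * e j * s i j" if "i \<in> V" "j \<in> V" "i \<noteq> j" for i j
    proof (cases "i = u \<or> j = u")
      case True
      then show ?thesis using u_edge[of i] u_edge[of j] that sym[of i j] by (auto simp: mult.commute)
    next
      case False
      then show ?thesis using d_rest[of i j] that by (simp add: e_def)
    qed
  qed
  then show False using \<open>\<not> balanced s V\<close> by simp
qed

definition neg_gram_off_diag :: "('n \<Rightarrow> 'a::real_inner) \<Rightarrow> ('n \<Rightarrow> 'n \<Rightarrow> real) \<Rightarrow> 'n set \<Rightarrow> bool" where
  "neg_gram_off_diag g s V \<longleftrightarrow> (\<forall>i\<in>V. \<forall>j\<in>V. i \<noteq> j \<longrightarrow> g i \<bullet> g j = - s i j)"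

lemma neg_gram_extend:
  fixes g' :: "'n \<Rightarrow> 'a::euclidean_space"
  assumes sym: "\<And>i j. s i j = s j i" and "finite V" "card V \<le> DIM('a)" "u \<in> V" "0 < t"
    and g': "neg_gram_off_diag g' (\<lambda>i j. s i j + t * (s i u * s j u)) (V - {u})"
    and dim_g': "dim (g' ` (V - {u})) + 2 \<le> card (V - {u})"
  shows "\<exists>g::'n \<Rightarrow> 'a. neg_gram_off_diag g s V \<and> dim (g ` V) + 2 \<le> card V"
proof -
  have card_V: "card V = card (V - {u}) + 1"
    using card.remove[OF assms(2,4)] by simp
  then have "dim (g' ` (V - {u})) < DIM('a)" using dim_g' assms(3) by linarith
  then obtain x :: 'a where "x \<noteq> 0" and x_orth: "\<And>y. y \<in> span (g' ` (V - {u})) \<Longrightarrow> orthogonal x y"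
    using orthogonal_to_subspace_exists by blast
  define e where "e = sgn x"
  have ee: "e \<bullet> e = 1" using \<open>x \<noteq> 0\<close> by (simp add: e_def dot_square_norm norm_sgn)
  have e_orth: "e \<bullet> g' i = 0" "g' i \<bullet> e = 0" if "i \<in> V - {u}" for i
    using x_orth[of "g' i"] that
    by (auto simp: e_def sgn_div_norm orthogonal_def span_base inner_commute)
  define c where "c = sqrt t"
  have "0 < c" "c * c = t" using \<open>0 < t\<close> by (auto simp: c_def)
  text \<open>A new direction e carries u, and is mixed into the old vectors to undo the perturbation.\<close>
  define g where "g i = (if i = u then (1 / c) *\<^sub>R e else g' i - (s u i * c) *\<^sub>R e)" for i
  have g_u: "g u \<bullet> g j = - s u j" if "j \<in> V - {u}" for j
    using that e_orth[OF that] ee \<open>0 < c\<close> by (simp add: g_def inner_diff_right)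
  have gram: "neg_gram_off_diag g s V"
    unfolding neg_gram_off_diag_def
  proof (intro ballI impI)
    fix i j assume "i \<in> V" "j \<in> V" "i \<noteq> j"
    show "g i \<bullet> g j = - s i j"
    proof (cases "i = u \<or> j = u")
      case True
      then show ?thesis
        using g_u[of i] g_u[of j] \<open>i \<in> V\<close> \<open>j \<in> V\<close> \<open>i \<noteq> j\<close> sym[of i j] by (auto simp: inner_commute)
    next
      case False
      then have ij: "i \<in> V - {u}" "j \<in> V - {u}" using \<open>i \<in> V\<close> \<open>j \<in> V\<close> by auto
      have "g i \<bullet> g j = g' i \<bullet> g' j + (s u i * c) * (s u j * c)"
        using False e_orth[OF ij(1)] e_orth[OF ij(2)] ee by (simp add: g_def inner_diff_left inner_diff_right)
      also have "(s u i * c) * (s u j * c) = (c * c) * (s i u * s j u)"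
        using sym[of u i] sym[of u j] by (simp add: ac_simps)
      finally show ?thesis
        using g'[unfolded neg_gram_off_diag_def] ij \<open>i \<noteq> j\<close> \<open>c * c = t\<close> by simp
    qed
  qed
  have "g ` V \<subseteq> span (insert e (g' ` (V - {u})))"
  proof -
    have "e \<in> span (insert e (g' ` (V - {u})))" by (simp add: span_base)
    moreover have "g' i \<in> span (insert e (g' ` (V - {u})))" if "i \<in> V - {u}" for i
      using that by (simp add: span_base)
    ultimately show ?thesis by (auto simp: g_def intro!: span_diff span_scale)
  qed
  then have "dim (g ` V) \<le> dim (span (insert e (g' ` (V - {u}))))" by (rule dim_subset)
  also have "\<dots> \<le> dim (g' ` (V - {u})) + 1" by (simp add: dim_insert)
  finally show ?thesis using gram dim_g' card_V by auto
qed

lemma real_rank_one_triangle: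
  fixes x y z :: real
  assumes "x * y * z < 0"
  shows "\<exists>a b c. a * b = - x \<and> a * c = - y \<and> b * c = - z"
proof -
  define R where "R = - (x * y) / z"
  have "z \<noteq> 0" using assms by auto
  have "0 < R * (z * z)" using assms \<open>z \<noteq> 0\<close> by (simp add: R_def)
  then have "0 < R" by (simp add: zero_less_mult_iff)
  define a where "a = sqrt R"
  have "0 < a" "a * a = R" using \<open>0 < R\<close> by (auto simp: a_def)
  have "(- x / a) * (- y / a) = - z"
    using \<open>a * a = R\<close> \<open>0 < a\<close> \<open>z \<noteq> 0\<close> by (simp add: R_def field_simps)
  then show ?thesis using \<open>0 < a\<close> by (intro exI[of _ a] exI[of _ "- x / a"] exI[of _ "- y / a"]) simp
qed

lemma neg_gram_negative_triangle:
  assumes sym: "\<And>i j. s i j = s j i" and "u \<noteq> p" "u \<noteq> q" "p \<noteq> q" "s u p * s u q * s p q < 0"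
  shows "\<exists>g::'n \<Rightarrow> 'a::euclidean_space.
    neg_gram_off_diag g s {u, p, q} \<and> dim (g ` {u, p, q}) + 2 \<le> card {u, p, q}"
proof -
  obtain a b c where abc: "a * b = - s u p" "a * c = - s u q" "b * c = - s p q"
    using real_rank_one_triangle[OF assms(5)] by blast
  obtain e :: 'a where "e \<in> Basis" using nonempty_Basis by blast
  define g where "g x = (if x = u then a else if x = p then b else c) *\<^sub>R e" for x
  have gram: "neg_gram_off_diag g s {u, p, q}"
    using abc assms(2-4) \<open>e \<in> Basis\<close> sym[of u p] sym[of u q] sym[of p q]
    by (auto simp: neg_gram_off_diag_def g_def inner_Basis mult.commute)
  have "r *\<^sub>R e \<in> span {e}" for r by (simp add: span_base span_scale)
  then have "g ` {u, p, q} \<subseteq> span {e}" by (auto simp: g_def)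
  then have "dim (g ` {u, p, q}) \<le> card {e}" by (rule dim_le_card) simp
  then show ?thesis using gram assms(2-4) by auto
qed

lemma unbalanced_imp_neg_gram:
  fixes s :: "'n \<Rightarrow> 'n \<Rightarrow> real"
  assumes "\<And>i j. s i j = s j i" "finite V" "card V \<le> DIM('a::euclidean_space)" "\<not> balanced s V"
  shows "\<exists>g::'n \<Rightarrow> 'a. neg_gram_off_diag g s V \<and> dim (g ` V) + 2 \<le> card V"
  using assms
proof (induction "card V" arbitrary: V s rule: less_induct)
  case less
  note sym = less.prems(1)
  have reduce: "\<exists>g::'n \<Rightarrow> 'a. neg_gram_off_diag g s V \<and> dim (g ` V) + 2 \<le> card V"
    if u: "u \<in> V" and t: "0 < t" and unbalanced: "\<not> balanced (\<lambda>i j. s i j + t * (s i u * s j u)) (V - {u})"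
    for u t
  proof -
    have "card (V - {u}) < card V" using less.prems(2) u by (rule card_Diff1_less)
    moreover have "card (V - {u}) \<le> DIM('a)" using less.prems(2,3) by (meson card_Diff1_le order_trans)
    ultimately obtain g' :: "'n \<Rightarrow> 'a"
      where "neg_gram_off_diag g' (\<lambda>i j. s i j + t * (s i u * s j u)) (V - {u})"
        and "dim (g' ` (V - {u})) + 2 \<le> card (V - {u})"
      using less.hyps[of "V - {u}" "\<lambda>i j. s i j + t * (s i u * s j u)"] less.prems(2) unbalanced sym
      by (auto simp: ac_simps)
    then show ?thesis using neg_gram_extend[where s = s, OF sym less.prems(2,3) u t] by blast
  qed
  show ?case
  proof (cases "\<exists>u\<in>V. \<not> balanced s (V - {u})")
    case True
    then obtain u where "u \<in> V" and "\<not> balanced s (V - {u})" ..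
    then obtain t where "0 < t" "\<not> balanced (\<lambda>i j. s i j + t * (s i u * s j u)) (V - {u})"
      using unbalanced_perturb[of "V - {u}" s "\<lambda>i j. s i u * s j u"] less.prems(2) by auto
    then show ?thesis using reduce \<open>u \<in> V\<close> by blast
  next
    case False
    have "V \<noteq> {}" using less.prems(4) by (auto intro: balancedI[of "\<lambda>_. 1"])
    then obtain u where "u \<in> V" by blast
    show ?thesis
    proof (rule critically_unbalanced_vertex[where s = s, OF sym less.prems(4) _ \<open>u \<in> V\<close>])
      show "balanced s (V - {w})" if "w \<in> V" for w using False that by simp
    next
      fix p q
      assume pq: "p \<in> V - {u}" "q \<in> V - {u}" "p \<noteq> q" "s p u \<noteq> 0" "s q u \<noteq> 0"
        and others: "\<And>x. x \<in> V - {u} \<Longrightarrow> x \<noteq> p \<Longrightarrow> x \<noteq> q \<Longrightarrow> s x u = 0"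
        and alternatives: "s p q = 0 \<or> (V = {u, p, q} \<and> s u p * s u q * s p q < 0)"
      from alternatives show ?thesis
      proof (elim disjE conjE)
        assume "s p q = 0"
        then show ?thesis
          using reduce[OF \<open>u \<in> V\<close> zero_less_one] unbalanced_eliminate_degree_two_vertex[where s = s
              and t = 1, OF sym less.prems(4) zero_less_one pq \<open>s p q = 0\<close> others]
          by simp
      next
        assume "V = {u, p, q}" "s u p * s u q * s p q < 0"
        then show ?thesis using neg_gram_negative_triangle[where s = s, OF sym, of u p q] pq by auto
      qed
    qed
  qed
qed

section \<open>The dual minimum rank\<close>

lemma psd_mult_transpose:
  fixes G :: "real^'n^'n"
  shows "psd (G ** transpose G)"
proof -
  have "x \<bullet> ((G ** transpose G) *v x) = (transpose G *v x) \<bullet> (transpose G *v x)" for x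
    by (metis dot_lmul_matrix matrix_vector_mul_assoc transpose_transpose vector_transpose_matrix)
  then show ?thesis by (simp add: psd_def symmetric_mat_def matrix_transpose_mul)
qed

lemma neg_gram_dual_decomposition:
  fixes S :: "real^'n^'n" and g :: "'n \<Rightarrow> real^'n"
  assumes "psd S" "neg_gram_off_diag g (\<lambda>i j. S$i$j) UNIV"
  obtains Sh E where "S = E - Sh" "psd Sh" "psd E" "diagonal_mat E" "rank Sh \<le> dim (range g)"
proof -
  define G :: "real^'n^'n" where "G = (\<chi> i. g i)"
  have rows_G: "rows G = range g" by (auto simp: rows_def row_def G_def)
  define Sh where "Sh = G ** transpose G"
  have "psd Sh" unfolding Sh_def by (rule psd_mult_transpose)
  moreover have "psd (Sh + S)" using \<open>psd Sh\<close> assms(1) by (rule psd_add)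
  moreover have "diagonal_mat (Sh + S)"
    using assms(2) by (simp add: diagonal_mat_def neg_gram_off_diag_def Sh_def G_def
        matrix_mult_transpose_dot_row row_def)
  moreover have "rank Sh \<le> dim (range g)"
    using rank_mul_le_left[of G "transpose G"] by (simp add: Sh_def row_rank_def rows_G)
  ultimately show ?thesis by (intro that[of "Sh + S" Sh]) simp_all
qed

lemma mr_dual_le:
  fixes S :: "real^'n^'n"
  assumes "S = E - Sh" "psd Sh" "psd E" "diagonal_mat E"
  shows "mr_dual S \<le> rank Sh"
proof -
  have "{rank Sh | Sh E. S = E - Sh \<and> psd Sh \<and> psd E \<and> diagonal_mat E} \<subseteq> {..CARD('n)}"
    using rank_bound by fastforce
  then show ?thesis
    unfolding mr_dual_def using assms by (intro Min_le) (auto intro: finite_subset)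
qed

lemma mr_dual_eqI:
  fixes S :: "real^'n^'n"
  assumes "S = E - Sh" "psd Sh" "psd E" "diagonal_mat E" "rank Sh \<le> k"
    and lower: "\<And>Sh E. S = E - Sh \<Longrightarrow> psd Sh \<Longrightarrow> psd E \<Longrightarrow> diagonal_mat E \<Longrightarrow> k \<le> rank Sh"
  shows "mr_dual S = k"
proof -
  have "k \<le> mr_dual S"
  proof -
    define F where "F = {rank Sh | Sh E. S = E - Sh \<and> psd Sh \<and> psd E \<and> diagonal_mat E}"
    have "F \<subseteq> {..CARD('n)}" using rank_bound by (fastforce simp: F_def)
    moreover have "F \<noteq> {}" using assms(1-4) by (auto simp: F_def)
    ultimately have "Min F \<in> F" by (intro Min_in) (auto intro: finite_subset)
    then show ?thesis using lower by (auto simp: mr_dual_def F_def)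
  qed
  then show ?thesis using mr_dual_le[OF assms(1-4)] assms(5) by simp
qed

lemma mr_dual_not_sign_nonneg:
  fixes S :: "real^'n^'n"
  assumes "psd S" "\<not> sign_nonneg S"
  shows "mr_dual S + 2 \<le> CARD('n)"
proof -
  have "\<exists>g :: 'n \<Rightarrow> real^'n. neg_gram_off_diag g (\<lambda>i j. S$i$j) UNIV \<and> dim (range g) + 2 \<le> CARD('n)"
    using assms symmetric_mat_nth[of S]
    by (intro unbalanced_imp_neg_gram) (auto simp: psd_def sign_nonneg_iff_balanced)
  then obtain g :: "'n \<Rightarrow> real^'n"
    where "neg_gram_off_diag g (\<lambda>i j. S$i$j) UNIV" and dim_g: "dim (range g) + 2 \<le> CARD('n)"
    by blast
  then obtain Sh E where "S = E - Sh" "psd Sh" "psd E" "diagonal_mat E" "rank Sh \<le> dim (range g)"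
    using neg_gram_dual_decomposition[OF \<open>psd S\<close>] by blast
  then have "mr_dual S \<le> dim (range g)" using mr_dual_le by fastforce
  then show ?thesis using dim_g by simp
qed

lemma mr_dual_sign_nonneg:
  fixes S :: "real^'n^'n"
  assumes "psd S" "irreducible_mat S" "sign_nonneg S"
  shows "mr_dual S = CARD('n) - 1"
proof -
  have sym: "symmetric_mat S" using assms(1) by (simp add: psd_def)
  obtain Sh E where dec: "S = E - Sh" "psd Sh" "psd E" "diagonal_mat E" and "rank Sh < CARD('n)"
    using sign_nonneg_dual_decomposition[OF assms(1,3)] by blast
  show ?thesis
  proof (rule mr_dual_eqI[OF dec])
    show "rank Sh \<le> CARD('n) - 1" using \<open>rank Sh < CARD('n)\<close> by simp
    show "CARD('n) - 1 \<le> rank Sh'" if "S = E' - Sh'" "psd Sh'" "psd E'" "diagonal_mat E'" for Sh' E'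
      by (rule dual_rank_lower_bound[OF assms(2) sym assms(3) that(1,4,2)])
  qed
qed

theorem theorem3:
  fixes S :: "real^'n^'n"
  assumes "pos_def S" and "irreducible_mat S"
  shows "mr_dual S = CARD('n) - 1 \<longleftrightarrow> sign_nonneg S"
proof
  have "psd S" using assms(1) by (rule pos_def_imp_psd)
  show "sign_nonneg S" if "mr_dual S = CARD('n) - 1"
    using mr_dual_not_sign_nonneg[OF \<open>psd S\<close>] that by (cases "sign_nonneg S") auto
  show "mr_dual S = CARD('n) - 1" if "sign_nonneg S"
    using \<open>psd S\<close> assms(2) that by (rule mr_dual_sign_nonneg)
qed

end
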